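(* For every $\rho\in(0,\tfrac12)$, the scalar equation $x'=-\bigl(x+\tfrac12\bigr)^2$ has the conditional Lipschitz shadowing property in $[-\rho,\infty)$.
   Context: For continuous $g\colon[0,\infty)\times\mathbb R\to\mathbb R$ and $\tau\in(0,\infty]$, a pseudosolution of $x'=g(t,x)$ on $[0,\tau)$ is a $C^1$ map $y\colon[0,\tau)\to\mathbb R$ with $\sigma_y:=\sup_{0\le t<\tau}|y'(t)-g(t,y(t))|<\infty$. The equation has the conditional Lipschitz shadowing property in $H\neq\emptyset$ if there exist $\varepsilon_0,\kappa>0$ such that whenever $0<\varepsilon\le\varepsilon_0$ and $y$ is a pseudosolution on $[0,\tau)$ ($\tau\in(0,\infty]$) with $\sigma_y\le\varepsilon$ and $y(t)\in H$ for all $t\in[0,\tau)$, there is a solution $x$ of the equation defined on $[0,\tau)$ with $\sup_{0\le t<\tau}|x(t)-y(t)|\le\kappa\varepsilon$. *)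

theory Defs
  imports "HOL-Analysis.Analysis"
begin

definition time_dom :: "ereal \<Rightarrow> real set" where
  "time_dom \<tau> = {t. 0 \<le> t \<and> ereal t < \<tau>}"

definition C1_with_deriv :: "ereal \<Rightarrow> (real \<Rightarrow> real) \<Rightarrow> (real \<Rightarrow> real) \<Rightarrow> bool" where
  "C1_with_deriv \<tau> y y' \<longleftrightarrow>
     (\<forall>t\<in>time_dom \<tau>. (y has_real_derivative y' t) (at t within time_dom \<tau>)) \<and>
     continuous_on (time_dom \<tau>) y'"

definition pseudosolution_le ::
  "(real \<Rightarrow> real \<Rightarrow> real) \<Rightarrow> ereal \<Rightarrow> (real \<Rightarrow> real) \<Rightarrow> real \<Rightarrow> bool" where
  "pseudosolution_le g \<tau> y \<epsilon> \<longleftrightarrow>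
     (\<exists>y'. C1_with_deriv \<tau> y y' \<and> (\<forall>t\<in>time_dom \<tau>. \<bar>y' t - g t (y t)\<bar> \<le> \<epsilon>))"

definition solution_on :: "(real \<Rightarrow> real \<Rightarrow> real) \<Rightarrow> ereal \<Rightarrow> (real \<Rightarrow> real) \<Rightarrow> bool" where
  "solution_on g \<tau> x \<longleftrightarrow>
     (\<forall>t\<in>time_dom \<tau>. (x has_real_derivative g t (x t)) (at t within time_dom \<tau>))"

definition cond_lipschitz_shadowing :: "(real \<Rightarrow> real \<Rightarrow> real) \<Rightarrow> real set \<Rightarrow> bool" where
  "cond_lipschitz_shadowing g H \<longleftrightarrow>
     (\<exists>\<epsilon>0>0. \<exists>\<kappa>>0. \<forall>\<epsilon> \<tau> y.
        0 < \<epsilon> \<and> \<epsilon> \<le> \<epsilon>0 \<and> 0 < \<tau> \<and> pseudosolution_le g \<tau> y \<epsilon> \<and>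
        (\<forall>t\<in>time_dom \<tau>. y t \<in> H) \<longrightarrow>
        (\<exists>x. solution_on g \<tau> x \<and> (\<forall>t\<in>time_dom \<tau>. \<bar>x t - y t\<bar> \<le> \<kappa> * \<epsilon>)))"

end

theory Submission
  imports Defs
begin

text \<open>Write \<open>\<delta> = 1/2 - \<rho>\<close> and compare a pseudosolution \<open>y\<close> with the exact solution \<open>x\<close>
  through \<open>y 0\<close>, namely \<open>x t + 1/2 = v/(1 + v t)\<close> with \<open>v = y 0 + 1/2 \<ge> \<delta>\<close>.
  The right-hand side is decreasing in \<open>x\<close> on \<open>x > -1/2\<close> with slope at most \<open>-\<delta>\<close> on the
  region where \<open>y\<close> lives, since \<open>(a + b)(a - b) \<ge> \<delta> (a - b)\<close> whenever \<open>a + b \<ge> \<delta>\<close>.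
  Hence as soon as \<open>|y - x|\<close> exceeds \<open>\<epsilon>/\<delta>\<close> the defect \<open>\<epsilon>\<close> is outweighed and \<open>y - x\<close> is
  pushed back; a barrier argument keeps \<open>|x - y| \<le> \<epsilon>/\<delta>\<close> for all times.\<close>

lemma nonpos_if_derivative_neg_where_pos:
  fixes \<phi> \<phi>' :: "real \<Rightarrow> real" and T :: real
  assumes T: "0 \<le> T"
    and deriv: "\<And>t. t \<in> {0..T} \<Longrightarrow> (\<phi> has_real_derivative \<phi>' t) (at t within {0..T})"
    and start: "\<phi> 0 \<le> 0"
    and neg: "\<And>t. t \<in> {0..T} \<Longrightarrow> \<phi> t > 0 \<Longrightarrow> \<phi>' t < 0"
  shows "\<phi> T \<le> 0"
proof (rule ccontr)
  assume "\<not> \<phi> T \<le> 0"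
  hence pos_T: "\<phi> T > 0" by simp
  have cont: "continuous_on {0..T} \<phi>" using deriv by (rule DERIV_continuous_on)
  define S where "S = {0..T} \<inter> \<phi> -` {..0}"
  have "closed S" unfolding S_def by (rule continuous_closed_preimage[OF cont]) auto
  hence "compact S" unfolding S_def by (simp add: compact_eq_bounded_closed bounded_Int)
  moreover have "0 \<in> S" using T start by (simp add: S_def)
  ultimately obtain t0 where t0: "t0 \<in> S" "\<And>s. s \<in> S \<Longrightarrow> s \<le> t0"
    using compact_attains_sup by (metis empty_iff)
  have t0_T: "t0 < T" using t0(1) pos_T unfolding S_def by (cases "t0 = T") auto
  have "\<exists>x\<in>{t0<..<T}. \<phi> T - \<phi> t0 = (\<lambda>h. \<phi>' x * h) (T - t0)"
  proof (rule mvt_simple[OF t0_T])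
    fix x assume "t0 \<le> x" "x \<le> T"
    moreover have "0 \<le> t0" using t0(1) by (simp add: S_def)
    ultimately have "x \<in> {0..T}" "{t0..T} \<subseteq> {0..T}" by auto
    from has_field_derivative_subset[OF deriv[OF this(1)] this(2)]
    show "(\<phi> has_derivative (\<lambda>h. \<phi>' x * h)) (at x within {t0..T})"
      by (simp add: has_field_derivative_def)
  qed
  then obtain x where x: "x \<in> {t0<..<T}" "\<phi> T - \<phi> t0 = (T - t0) * \<phi>' x" by auto
  have x_in: "x \<in> {0..T}" using x(1) t0(1) by (auto simp: S_def)
  have "\<phi> x > 0"
  proof (rule ccontr)
    assume "\<not> \<phi> x > 0"
    hence "x \<in> S" using x_in by (simp add: S_def)
    thus False using t0(2) x(1) by fastforce
  qed
  hence "(T - t0) * \<phi>' x < 0" using neg x_in t0_T by (simp add: mult_pos_neg)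
  moreover have "\<phi> t0 \<le> 0" using t0(1) by (simp add: S_def)
  ultimately show False using x(2) pos_T by linarith
qed

lemma abs_le_if_derivative_restoring:
  fixes w w' :: "real \<Rightarrow> real" and T c :: real
  assumes T: "0 \<le> T"
    and deriv: "\<And>t. t \<in> {0..T} \<Longrightarrow> (w has_real_derivative w' t) (at t within {0..T})"
    and start: "\<bar>w 0\<bar> \<le> c"
    and above: "\<And>t. t \<in> {0..T} \<Longrightarrow> w t > c \<Longrightarrow> w' t < 0"
    and below: "\<And>t. t \<in> {0..T} \<Longrightarrow> w t < - c \<Longrightarrow> w' t > 0"
  shows "\<bar>w T\<bar> \<le> c"
proof -
  have "(\<lambda>t. w t - c) T \<le> 0"
    by (rule nonpos_if_derivative_neg_where_pos[OF T, where \<phi>' = w'])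
      (use deriv start above in \<open>auto intro!: derivative_eq_intros\<close>)
  moreover have "(\<lambda>t. - w t - c) T \<le> 0"
    by (rule nonpos_if_derivative_neg_where_pos[OF T, where \<phi>' = "\<lambda>t. - w' t"])
      (use deriv start below in \<open>force intro!: derivative_eq_intros\<close>)+
  ultimately show ?thesis by simp
qed

lemma diff_squares_ge:
  fixes a b \<delta> :: real
  assumes "\<delta> \<le> a + b" and "0 \<le> a - b"
  shows "\<delta> * (a - b) \<le> a\<^sup>2 - b\<^sup>2"
proof -
  have "\<delta> * (a - b) \<le> (a + b) * (a - b)" using assms by (rule mult_right_mono)
  also have "\<dots> = a\<^sup>2 - b\<^sup>2" by (simp add: power2_eq_square algebra_simps)
  finally show ?thesis .
qed

lemma riccati_solution_has_derivative:
  fixes v t :: real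
  assumes "0 \<le> v" and "0 \<le> t"
  shows "((\<lambda>t. v / (1 + v * t)) has_real_derivative - (v / (1 + v * t))\<^sup>2) (at t)"
proof -
  have "1 + v * t \<noteq> 0" using assms by (smt (verit) mult_nonneg_nonneg)
  hence "((\<lambda>t. v / (1 + v * t)) has_real_derivative - (v * v) / (1 + v * t)\<^sup>2) (at t)"
    by (auto intro!: derivative_eq_intros simp: power2_eq_square)
  thus ?thesis by (simp add: power_divide power2_eq_square)
qed

lemma time_dom_interval_subset:
  assumes "t \<in> time_dom \<tau>"
  shows "{0..t} \<subseteq> time_dom \<tau>"
  using assms by (auto simp: time_dom_def) (meson ereal_less_eq(3) le_less_trans)

lemma riccati_shadowing_estimate:
  fixes y y' x :: "real \<Rightarrow> real" and \<tau> :: ereal and \<delta> \<epsilon> :: real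
  assumes \<delta>: "0 < \<delta>"
    and y_deriv: "\<And>t. t \<in> time_dom \<tau> \<Longrightarrow> (y has_real_derivative y' t) (at t within time_dom \<tau>)"
    and defect: "\<And>t. t \<in> time_dom \<tau> \<Longrightarrow> \<bar>y' t + (y t + 1/2)\<^sup>2\<bar> \<le> \<epsilon>"
    and y_region: "\<And>t. t \<in> time_dom \<tau> \<Longrightarrow> \<delta> \<le> y t + 1/2"
    and x_deriv: "\<And>t. 0 \<le> t \<Longrightarrow> (x has_real_derivative - (x t + 1/2)\<^sup>2) (at t)"
    and x_region: "\<And>t. 0 \<le> t \<Longrightarrow> 0 \<le> x t + 1/2"
    and same_start: "x 0 = y 0"
    and \<epsilon>: "0 \<le> \<epsilon>"
    and t: "t \<in> time_dom \<tau>"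
  shows "\<bar>x t - y t\<bar> \<le> \<epsilon> / \<delta>"
proof -
  have sub: "{0..t} \<subseteq> time_dom \<tau>" using t by (rule time_dom_interval_subset)
  have bound_nonneg: "0 \<le> \<epsilon> / \<delta>" using \<epsilon> \<delta> by simp
  let ?gap = "\<lambda>s. (y s + 1/2)\<^sup>2 - (x s + 1/2)\<^sup>2"
  have "\<bar>y t - x t\<bar> \<le> \<epsilon> / \<delta>"
  proof (rule abs_le_if_derivative_restoring[where w = "\<lambda>s. y s - x s" and w' = "\<lambda>s. y' s + (x s + 1/2)\<^sup>2"])
    show "0 \<le> t" using t by (simp add: time_dom_def)
    show "\<bar>y 0 - x 0\<bar> \<le> \<epsilon> / \<delta>" using same_start bound_nonneg by simp
  next
    fix s assume s: "s \<in> {0..t}"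
    have "(y has_real_derivative y' s) (at s within {0..t})"
      using has_field_derivative_subset[OF y_deriv sub] s sub by auto
    moreover have "(x has_real_derivative - (x s + 1/2)\<^sup>2) (at s within {0..t})"
      using x_deriv s by (auto intro: has_field_derivative_at_within)
    ultimately show "((\<lambda>s. y s - x s) has_real_derivative y' s + (x s + 1/2)\<^sup>2) (at s within {0..t})"
      using DERIV_diff by fastforce
    have s_dom: "s \<in> time_dom \<tau>" using s sub by auto
    have sum_ge: "\<delta> \<le> (y s + 1/2) + (x s + 1/2)" "\<delta> \<le> (x s + 1/2) + (y s + 1/2)"
      using y_region[OF s_dom] x_region[of s] s by auto
    have y'_s: "y' s \<le> \<epsilon> - (y s + 1/2)\<^sup>2" "- \<epsilon> - (y s + 1/2)\<^sup>2 \<le> y' s"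
      using defect[OF s_dom] by (simp_all add: abs_le_iff)
    show "y' s + (x s + 1/2)\<^sup>2 < 0" if "y s - x s > \<epsilon> / \<delta>"
    proof -
      have "\<epsilon> < \<delta> * (y s - x s)" using that \<delta> by (simp add: divide_less_eq mult.commute)
      also have "\<dots> \<le> ?gap s" using diff_squares_ge[OF sum_ge(1)] that bound_nonneg by simp
      finally show ?thesis using y'_s by linarith
    qed
    show "y' s + (x s + 1/2)\<^sup>2 > 0" if "y s - x s < - (\<epsilon> / \<delta>)"
    proof -
      have "\<epsilon> / \<delta> < x s - y s" using that by linarith
      hence "\<epsilon> < \<delta> * (x s - y s)" using \<delta> by (simp add: divide_less_eq mult.commute)
      also have "\<dots> \<le> - ?gap s" using diff_squares_ge[OF sum_ge(2)] that bound_nonneg by simp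
      finally show ?thesis using y'_s by linarith
    qed
  qed
  thus ?thesis by (simp add: abs_minus_commute)
qed

lemma riccati_solution_near_pseudosolution:
  fixes y y' :: "real \<Rightarrow> real" and \<tau> :: ereal and \<delta> \<epsilon> :: real
  assumes \<delta>: "0 < \<delta>" and \<epsilon>: "0 \<le> \<epsilon>" and \<tau>: "0 < \<tau>"
    and y_deriv: "\<And>t. t \<in> time_dom \<tau> \<Longrightarrow> (y has_real_derivative y' t) (at t within time_dom \<tau>)"
    and defect: "\<And>t. t \<in> time_dom \<tau> \<Longrightarrow> \<bar>y' t + (y t + 1/2)\<^sup>2\<bar> \<le> \<epsilon>"
    and y_region: "\<And>t. t \<in> time_dom \<tau> \<Longrightarrow> \<delta> \<le> y t + 1/2"
  shows "\<exists>x. solution_on (\<lambda>t x. - ((x + 1/2)^2)) \<tau> x \<and>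
    (\<forall>t\<in>time_dom \<tau>. \<bar>x t - y t\<bar> \<le> \<epsilon> / \<delta>)"
proof -
  have "0 \<in> time_dom \<tau>" using \<tau> by (simp add: time_dom_def zero_ereal_def)
  define v where "v = y 0 + 1/2"
  have v: "0 < v" using y_region[OF \<open>0 \<in> time_dom \<tau>\<close>] \<delta> by (simp add: v_def)
  define x where "x t = v / (1 + v * t) - 1/2" for t
  have x_deriv: "(x has_real_derivative - (x t + 1/2)\<^sup>2) (at t)" if "0 \<le> t" for t
    using DERIV_diff[OF riccati_solution_has_derivative[OF less_imp_le[OF v] that]
        DERIV_const[of "1/2"]]
    by (simp add: x_def [abs_def])
  have x_region: "0 \<le> x t + 1/2" if "0 \<le> t" for t
    using v that by (simp add: x_def)
  have "solution_on (\<lambda>t x. - ((x + 1/2)^2)) \<tau> x"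
    unfolding solution_on_def
    by (auto intro!: has_field_derivative_at_within x_deriv simp: time_dom_def)
  moreover have "x 0 = y 0" by (simp add: x_def v_def)
  then have "\<bar>x t - y t\<bar> \<le> \<epsilon> / \<delta>" if "t \<in> time_dom \<tau>" for t
    using riccati_shadowing_estimate[OF \<delta> y_deriv defect y_region, of x] x_deriv x_region \<epsilon> that
    by blast
  ultimately show ?thesis by blast
qed

theorem mainTheorem11:
  fixes \<rho> :: real
  assumes "0 < \<rho>" and "\<rho> < 1/2"
  shows "cond_lipschitz_shadowing (\<lambda>t x. - ((x + 1/2)^2)) {-\<rho>..}"
  unfolding cond_lipschitz_shadowing_def
proof (rule exI[of _ 1], intro conjI exI[of _ "1 / (1/2 - \<rho>)"] allI impI)
  have \<delta>: "0 < 1/2 - \<rho>" using assms by simp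
  then show "(0::real) < 1" "0 < 1 / (1/2 - \<rho>)" by simp_all
  fix \<epsilon> :: real and \<tau> :: ereal and y :: "real \<Rightarrow> real"
  assume H: "0 < \<epsilon> \<and> \<epsilon> \<le> 1 \<and> 0 < \<tau> \<and> pseudosolution_le (\<lambda>t x. - ((x + 1/2)^2)) \<tau> y \<epsilon> \<and>
      (\<forall>t\<in>time_dom \<tau>. y t \<in> {-\<rho>..})"
  then obtain y' where "\<And>t. t \<in> time_dom \<tau> \<Longrightarrow> (y has_real_derivative y' t) (at t within time_dom \<tau>)"
    and "\<And>t. t \<in> time_dom \<tau> \<Longrightarrow> \<bar>y' t + (y t + 1/2)\<^sup>2\<bar> \<le> \<epsilon>"
    unfolding pseudosolution_le_def C1_with_deriv_def by auto
  moreover have "\<And>t. t \<in> time_dom \<tau> \<Longrightarrow> 1/2 - \<rho> \<le> y t + 1/2" using H by auto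
  ultimately show "\<exists>x. solution_on (\<lambda>t x. - ((x + 1/2)^2)) \<tau> x \<and>
      (\<forall>t\<in>time_dom \<tau>. \<bar>x t - y t\<bar> \<le> 1 / (1/2 - \<rho>) * \<epsilon>)"
    using riccati_solution_near_pseudosolution[OF \<delta>, of \<epsilon> \<tau> y y'] H by simp
qed

end
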